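(* Under the standing setup and assumptions (A1)–(A3) described in the context, let $\delta>0$ be as in (A3). Let $(p^b_i)_{i\in I}$ and $(p^t_j)_{j\in J}$ be probability vectors with $p^b_i=0$ for $i\notin I_\delta$ and $p^t_j=0$ for $j\notin J_\delta$; let $\rho^b=\mathrm{diag}(p^b_i)$, $\rho^t=\mathrm{diag}(p^t_j)$, and $$\rho_0=\sum_{i,i'\in I}\sum_{j,j'\in J}\rho^b_{ii'}\rho^t_{jj'}\,|i,j\rangle\langle i',j'|.$$ Then $U\rho_0U^\dagger$ is supported in $V$, and there exist Hermitian matrices $\sigma^b$ (indexed by $I\times I$) and $\sigma^t$ (indexed by $J\times J$) such that $$U\rho_0U^\dagger=\sum_{i,i'\in I}\sum_{j,j'\in J}\sigma^b_{ii'}\sigma^t_{jj'}\,|i,j\rangle\langle i',j'|,$$ and $\mathrm{Spec}(\sigma^b)=\mathrm{Spec}(\rho^b)$, $\mathrm{Spec}(\sigma^t)=\mathrm{Spec}(\rho^t)$ (equality of eigenvalues counted with multiplicity).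
   Context: Standing setup. $\mathcal H$ is a finite-dimensional complex Hilbert space; $I$ and $J$ are finite index sets and $\{|i,j\rangle: i\in I,j\in J\}$ is an orthonormal family in $\mathcal H$ (physically: low-energy edge states of a gapped 2D system on a cylinder, $i$ labelling the bottom edge and $j$ the top edge, in a fixed topological sector). $V$ denotes their span. Real numbers $\varepsilon^b_i$ ($i\in I$) and $\varepsilon^t_j$ ($j\in J$) are given (physically $\varepsilon^b_i=E^b_i-\mu_bN^b_i$, $\varepsilon^t_j=E^t_j-\mu_tN^t_j$). There is a distinguished index, denoted $\Omega$, in $I$ and in $J$ with $\varepsilon^b_\Omega=\varepsilon^t_\Omega=0\le \varepsilon^b_i,\varepsilon^t_j$ for all $i,j$. For $\delta>0$ put $I_\delta=\{i\in I:\varepsilon^b_i\le\delta\}$, $J_\delta=\{j\in J:\varepsilon^t_j\le\delta\}$, $V_\delta=\mathrm{span}\{|i,j\rangle:i\in I_\delta,j\in J_\delta\}$. $\mathcal A_b$ and $\mathcal A_t$ are sets of linear operators on $\mathcal H$ ("operators supported near the bottom edge / top edge"), each closed under sums, scalar multiples, products and adjoints and containing the identity, such that every element of $\mathcal A_b$ commutes with every element of $\mathcal A_t$. $U$ is a unitary on $\mathcal H$ (the flux-insertion evolution, a finite-time evolution by a local Hamiltonian) such that $U^\dagger\mathcal A_bU\subseteq\mathcal A_b$, $U\mathcal A_bU^\dagger\subseteq\mathcal A_b$, $U^\dagger\mathcal A_tU\subseteq\mathcal A_t$, $U\mathcal A_tU^\dagger\subseteq\mathcal A_t$ (idealized Lieb–Robinson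 locality). Assumptions. (A1) For all $i,i'\in I$ there is $O^b_{i'i}\in\mathcal A_b$ with $O^b_{i'i}|k,j\rangle=\delta_{ki}|i',j\rangle$ for all $k\in I,j\in J$; for all $j,j'\in J$ there is $O^t_{j'j}\in\mathcal A_t$ with $O^t_{j'j}|i,l\rangle=\delta_{lj}|i,j'\rangle$ for all $i\in I,l\in J$. (A2) For all $i\in I$, $j\in J$, $O^b\in\mathcal A_b$, $O^t\in\mathcal A_t$: $\langle i,j|O^bO^t|i,j\rangle=\langle i,j|O^b|i,j\rangle\langle i,j|O^t|i,j\rangle$. (A3) There is $\delta>0$ with $U V_\delta\subseteq V$. (The diagonal $\rho^b,\rho^t$ model the edge Gibbs states at temperatures well below $\delta$.) *)

theory Defs
  imports "Jordan_Normal_Form.Schur_Decomposition"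
begin

text \<open>Hilbert space H = complex column vectors of dimension d.
  Operators on H = complex d x d matrices. Physics inner product
  <x|y> = sum_r cnj (x r) * y r, which in JNF notation is  y \<bullet>c x.\<close>

definition braket :: "complex vec \<Rightarrow> complex vec \<Rightarrow> complex" where
  "braket x y = y \<bullet>c x"

definition hermitian_mat :: "complex mat \<Rightarrow> bool" where
  "hermitian_mat A \<longleftrightarrow> mat_adjoint A = A"

definition unitary_mat :: "nat \<Rightarrow> complex mat \<Rightarrow> bool" where
  "unitary_mat d U \<longleftrightarrow> U \<in> carrier_mat d d \<and>
     U * mat_adjoint U = 1\<^sub>m d \<and> mat_adjoint U * U = 1\<^sub>m d"

definition spec_mset :: "complex mat \<Rightarrow> complex multiset" where
  "spec_mset A = proots (char_poly A)"

definition in_span_fam :: "nat \<Rightarrow> (nat \<Rightarrow> nat \<Rightarrow> complex vec) \<Rightarrow> (nat \<times> nat) set \<Rightarrow> complex vec \<Rightarrow> bool" where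
  "in_span_fam d e S v \<longleftrightarrow> v \<in> carrier_vec d \<and>
     (\<exists>c :: nat \<Rightarrow> nat \<Rightarrow> complex. \<forall>r<d. v $ r = (\<Sum>(i,j)\<in>S. c i j * (e i j $ r)))"

definition ketbra :: "nat \<Rightarrow> complex vec \<Rightarrow> complex vec \<Rightarrow> complex mat" where
  "ketbra d x y = mat d d (\<lambda>(r,c). x $ r * cnj (y $ c))"

text \<open>sum_{i,i' in I} sum_{j,j' in J} A_{ii'} B_{jj'} |i,j><i',j'| with I = {0..<m}, J = {0..<k}.\<close>
definition prod_op :: "nat \<Rightarrow> (nat \<Rightarrow> nat \<Rightarrow> complex vec) \<Rightarrow> nat \<Rightarrow> nat \<Rightarrow> complex mat \<Rightarrow> complex mat \<Rightarrow> complex mat" where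
  "prod_op d e m k A B = mat d d (\<lambda>(r,c).
     \<Sum>i<m. \<Sum>i'<m. \<Sum>j<k. \<Sum>j'<k. A $$ (i,i') * B $$ (j,j') * ketbra d (e i j) (e i' j') $$ (r,c))"

definition diag_of :: "nat \<Rightarrow> (nat \<Rightarrow> real) \<Rightarrow> complex mat" where
  "diag_of m p = mat m m (\<lambda>(i,i'). if i = i' then complex_of_real (p i) else 0)"

definition op_algebra :: "nat \<Rightarrow> complex mat set \<Rightarrow> bool" where
  "op_algebra d A \<longleftrightarrow> A \<subseteq> carrier_mat d d \<and> 1\<^sub>m d \<in> A \<and>
     (\<forall>X\<in>A. \<forall>Y\<in>A. X + Y \<in> A \<and> X * Y \<in> A) \<and>
     (\<forall>X\<in>A. \<forall>a::complex. a \<cdot>\<^sub>m X \<in> A) \<and>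
     (\<forall>X\<in>A. mat_adjoint X \<in> A)"

end

theory Submission
  imports Defs
begin

text \<open>
  For low-energy labels the evolved states psi i j = U e i j lie in V by (A3). Conjugating (A2)
  by U and testing it against the matrix units of (A1) shows that the coefficients of psi i j
  factorise, (e a b|psi)(e a' b'|psi)^* = rho_b a a' * rho_t b b', with the bottom marginal
  rho_b independent of j and the top marginal rho_t independent of i: a top-edge operator moving
  psi i j to psi i j' commutes with all bottom observables. Hence U rho_0 U^* =
  sum p_b i p_t j |psi i j)(psi i j| factorises with sigma_b = sum p_b i rho_b (psi i Omega)
  and sigma_t likewise. The states psi i Omega are orthonormal products u i (x) w with a common
  w, so sigma_b = A D A^* with D = diag p_b and A^* A D = D, and char_poly (X Y) =
  char_poly (Y X) identifies the spectra.
\<close>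

lemma sum_sum_delta:
  fixes f :: "nat \<Rightarrow> nat \<Rightarrow> 'a::comm_monoid_add"
  assumes "a < m" "b < k"
  shows "(\<Sum>i<m. \<Sum>j<k. if i = a \<and> j = b then f i j else 0) = f a b"
proof -
  have "(\<Sum>i<m. \<Sum>j<k. if i = a \<and> j = b then f i j else 0) = (\<Sum>i<m. if i = a then f i b else 0)"
    using assms by (intro sum.cong refl) auto
  then show ?thesis using assms by simp
qed

lemma index_mult_mat_sum:
  assumes "A \<in> carrier_mat n1 n2" "B \<in> carrier_mat n2 n3" "i < n1" "j < n3"
  shows "(A * B) $$ (i,j) = (\<Sum>l<n2. A $$ (i,l) * B $$ (l,j))"
  using assms by (simp add: scalar_prod_def atLeast0LessThan)

lemma index_mult_mat_vec_sum:
  assumes "A \<in> carrier_mat n1 n2" "v \<in> carrier_vec n2" "r < n1"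
  shows "(A *\<^sub>v v) $ r = (\<Sum>s<n2. A $$ (r,s) * v $ s)"
  using assms by (simp add: scalar_prod_def atLeast0LessThan)

lemma mat_adjoint_dim [simp]:
  "dim_row (mat_adjoint A) = dim_col A" "dim_col (mat_adjoint A) = dim_row A"
  unfolding mat_adjoint_def by (auto simp: mat_of_rows_def)

lemma mat_adjoint_carrier [simp]: "A \<in> carrier_mat n1 n2 \<Longrightarrow> mat_adjoint A \<in> carrier_mat n2 n1"
  unfolding mat_adjoint_def by (auto simp: mat_of_rows_def)

lemma mult_carrier_mat_square [simp]:
  "A \<in> carrier_mat n n \<Longrightarrow> B \<in> carrier_mat n n \<Longrightarrow> A * B \<in> carrier_mat n n"
  by (rule mult_carrier_mat)

lemma mult_mat_vec_carrier_square [simp]: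
  "A \<in> carrier_mat n n \<Longrightarrow> v \<in> carrier_vec n \<Longrightarrow> A *\<^sub>v v \<in> carrier_vec n"
  by (rule mult_mat_vec_carrier)

lemma index_mat_adjoint:
  assumes "A \<in> carrier_mat n1 n2" "i < n2" "j < n1"
  shows "mat_adjoint A $$ (i,j) = cnj (A $$ (j,i))"
  using assms unfolding mat_adjoint_def by (auto simp: mat_of_rows_def)

lemma braket_eq_sum: "x \<in> carrier_vec d \<Longrightarrow> braket x y = (\<Sum>r<d. y $ r * cnj (x $ r))"
  unfolding braket_def by (simp add: scalar_prod_def atLeast0LessThan)

lemma braket_conj_sym: "x \<in> carrier_vec d \<Longrightarrow> y \<in> carrier_vec d \<Longrightarrow> braket x y = cnj (braket y x)"
  by (simp add: braket_eq_sum mult.commute)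

lemma braket_zero_right: "v \<in> carrier_vec n \<Longrightarrow> braket v (0\<^sub>v n) = 0"
  unfolding braket_def by (simp add: scalar_prod_def)

lemma braket_mult_mat_vec_left:
  assumes U: "U \<in> carrier_mat d d" and x: "x \<in> carrier_vec d" and y: "y \<in> carrier_vec d"
  shows "braket (U *\<^sub>v x) y = braket x (mat_adjoint U *\<^sub>v y)"
proof -
  have "braket (U *\<^sub>v x) y = (\<Sum>r<d. \<Sum>s<d. y $ r * cnj (U $$ (r,s)) * cnj (x $ s))"
    using U x by (simp add: braket_eq_sum[of _ d] index_mult_mat_vec_sum sum_distrib_left mult.assoc
        del: index_mult_mat_vec)
  also have "\<dots> = (\<Sum>s<d. \<Sum>r<d. y $ r * cnj (U $$ (r,s)) * cnj (x $ s))"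
    by (rule sum.swap)
  also have "\<dots> = braket x (mat_adjoint U *\<^sub>v y)"
    using U x y by (simp add: braket_eq_sum[of _ d] index_mult_mat_vec_sum[OF mat_adjoint_carrier[OF U] y]
        index_mat_adjoint[OF U] sum_distrib_left sum_distrib_right mult_ac del: index_mult_mat_vec)
  finally show ?thesis .
qed

lemma braket_conj_mat:
  assumes "M \<in> carrier_mat d d" "N \<in> carrier_mat d d" "x \<in> carrier_vec d"
  shows "braket (M *\<^sub>v x) (N *\<^sub>v (M *\<^sub>v x)) = braket x ((mat_adjoint M * N * M) *\<^sub>v x)"
  using assms by (simp add: braket_mult_mat_vec_left assoc_mult_mat_vec[of _ d d _ d])

section \<open>Spectra of orthonormal mixtures\<close>

lemma char_poly_mult_commute:
  fixes X Y :: "'a::field mat"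
  assumes X: "X \<in> carrier_mat n n" and Y: "Y \<in> carrier_mat n n"
  shows "char_poly (X * Y) = char_poly (Y * X)"
proof -
  let ?P = "map_mat (\<lambda>a. [:a:])"
  let ?x = "[:0,1:] :: 'a poly"
  define M where "M = four_block_mat (1\<^sub>m n) (?P X) (?P Y) (?x \<cdot>\<^sub>m 1\<^sub>m n)"
  define M' where "M' = four_block_mat (?x \<cdot>\<^sub>m 1\<^sub>m n) (?P Y) (?P X) (1\<^sub>m n)"
  have PX: "?P X \<in> carrier_mat n n" and PY: "?P Y \<in> carrier_mat n n" using X Y by auto
  have char_poly_matrix_mult: "char_poly_matrix (A * B) = ?x \<cdot>\<^sub>m 1\<^sub>m n - ?P A * ?P B"
    if A: "A \<in> carrier_mat n n" and B: "B \<in> carrier_mat n n" for A B :: "'a mat"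
  proof -
    have "?P A * ?P B = ?P (A * B)" using map_poly_mult(1)[OF A B] by simp
    then show ?thesis unfolding char_poly_matrix_def using A B
      by (intro eq_matI, auto)
  qed
  have "det M = det (1\<^sub>m n * (?x \<cdot>\<^sub>m 1\<^sub>m n) - ?P X * ?P Y)"
    unfolding M_def by (rule det_four_block_mat, insert PX PY, auto)
  then have det_M: "det M = char_poly (X * Y)"
    unfolding char_poly_def char_poly_matrix_mult[OF X Y] by simp
  have "det M' = det ((?x \<cdot>\<^sub>m 1\<^sub>m n) * 1\<^sub>m n - ?P Y * ?P X)"
    unfolding M'_def by (rule det_four_block_mat, insert PX PY, auto)
  then have det_M': "det M' = char_poly (Y * X)"
    unfolding char_poly_def char_poly_matrix_mult[OF Y X] by simp
  \<comment> \<open>M' arises from M by swapping the two block rows and the two block columns.\<close>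
  have Mc: "M \<in> carrier_mat (n + n) (n + n)" unfolding M_def using PX PY by auto
  define M1 where "M1 = mat (n + n) (n + n) (\<lambda>(i,j). M $$ ((if i < n then i + n else i - n), j))"
  have M1c: "M1 \<in> carrier_mat (n + n) (n + n)" unfolding M1_def by auto
  have "det M = (-1)^(n*n) * det M1" unfolding M1_def by (rule det_swap_rows[OF Mc])
  also have "det M1 = (-1)^(n*n) * det (mat (n + n) (n + n)
      (\<lambda>(i,j). M1 $$ (i, (if j < n then j + n else j - n))))"
    by (rule det_swap_cols[OF M1c])
  also have "mat (n + n) (n + n) (\<lambda>(i,j). M1 $$ (i, (if j < n then j + n else j - n))) = M'"
    unfolding M1_def M'_def M_def using PX PY by (intro eq_matI, auto)
  finally have "det M = ((-1)^(n*n) * (-1)^(n*n)) * det M'" by simp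
  also have "((-1)^(n*n) * (-1)^(n*n) :: 'a poly) = 1"
    by (simp add: power_mult_distrib[symmetric])
  finally show ?thesis using det_M det_M' by simp
qed

lemma char_poly_orthonormal_mixture:
  fixes u :: "nat \<Rightarrow> nat \<Rightarrow> complex" and p :: "nat \<Rightarrow> real"
  assumes supp: "\<And>i. i < n \<Longrightarrow> p i \<noteq> 0 \<Longrightarrow> i \<in> S"
    and orth: "\<And>i i'. i \<in> S \<Longrightarrow> i' \<in> S \<Longrightarrow>
      (\<Sum>a<n. cnj (u i a) * u i' a) = (if i = i' then 1 else 0)"
  shows "char_poly (mat n n (\<lambda>(a,a'). \<Sum>i<n. of_real (p i) * (u i a * cnj (u i a'))))
       = char_poly (diag_of n p)"
proof -
  define A where "A = mat n n (\<lambda>(a,i). if i \<in> S then u i a else 0)"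
  define B where "B = mat n n (\<lambda>(a,i). A $$ (a,i) * of_real (p i))"
  have A: "A \<in> carrier_mat n n" and B: "B \<in> carrier_mat n n" and A': "mat_adjoint A \<in> carrier_mat n n"
    unfolding A_def B_def by auto
  have "mat n n (\<lambda>(a,a'). \<Sum>i<n. of_real (p i) * (u i a * cnj (u i a'))) = B * mat_adjoint A"
  proof (rule eq_matI)
    fix a a' assume "a < dim_row (B * mat_adjoint A)" "a' < dim_col (B * mat_adjoint A)"
    then have aa': "a < n" "a' < n" using A' B by auto
    have "(B * mat_adjoint A) $$ (a,a') = (\<Sum>i<n. B $$ (a,i) * cnj (A $$ (a',i)))"
      using aa' by (simp add: index_mult_mat_sum[OF B A'] index_mat_adjoint[OF A])
    also have "\<dots> = (\<Sum>i<n. of_real (p i) * (u i a * cnj (u i a')))"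
      using aa' supp by (intro sum.cong) (auto simp: A_def B_def)
    finally show "mat n n (\<lambda>(a,a'). \<Sum>i<n. of_real (p i) * (u i a * cnj (u i a'))) $$ (a,a')
      = (B * mat_adjoint A) $$ (a,a')" using aa' by simp
  qed (use A' B in auto)
  moreover have "mat_adjoint A * B = diag_of n p"
  proof (rule eq_matI)
    fix i i' assume "i < dim_row (diag_of n p)" "i' < dim_col (diag_of n p)"
    then have ii': "i < n" "i' < n" by (auto simp: diag_of_def)
    have "(mat_adjoint A * B) $$ (i,i') = (\<Sum>a<n. cnj (A $$ (a,i)) * A $$ (a,i')) * of_real (p i')"
      unfolding index_mult_mat_sum[OF A' B ii'] using ii'
      by (simp add: index_mat_adjoint[OF A] B_def sum_distrib_right mult.assoc)
    also have "\<dots> = diag_of n p $$ (i,i')"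
      using ii' supp[of i'] orth[of i i']
      by (cases "i \<in> S"; cases "i' \<in> S") (auto simp: A_def diag_of_def)
    finally show "(mat_adjoint A * B) $$ (i,i') = diag_of n p $$ (i,i')" .
  qed (use A' B in \<open>auto simp: diag_of_def\<close>)
  ultimately show ?thesis using char_poly_mult_commute[OF B A'] by simp
qed

lemma factorized_matrix_rank_one:
  fixes C R T :: "nat \<Rightarrow> nat \<Rightarrow> complex"
  assumes factor: "\<And>x x' y y'. x < n \<Longrightarrow> x' < n \<Longrightarrow> y < l \<Longrightarrow> y' < l \<Longrightarrow>
        C x y * cnj (C x' y') = R x x' * T y y'"
    and y0: "y0 < l" and T_y0: "T y0 y0 = of_real t" and t: "t > 0"
    and col_norm: "(\<Sum>x<n. cnj (C x y0) * C x y0) = of_real t"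
  shows "x < n \<Longrightarrow> x' < n \<Longrightarrow> R x x' = C x y0 * cnj (C x' y0) / of_real t"
    and "x < n \<Longrightarrow> y < l \<Longrightarrow> C x y * of_real t = C x y0 * T y y0"
proof -
  have R_eq: "R x x' = C x y0 * cnj (C x' y0) / of_real t" if "x < n" "x' < n" for x x'
    using factor[OF that y0 y0] T_y0 t by (simp add: field_simps)
  then show "x < n \<Longrightarrow> x' < n \<Longrightarrow> R x x' = C x y0 * cnj (C x' y0) / of_real t" .
  assume x: "x < n" and y: "y < l"
  have "C x y * of_real t = (\<Sum>x'<n. C x y * cnj (C x' y0) * C x' y0)"
    by (simp add: col_norm[symmetric] sum_distrib_left mult_ac)
  also have "\<dots> = (\<Sum>x'<n. C x y0 * T y y0 * (cnj (C x' y0) * C x' y0) / of_real t)"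
    using factor[OF x _ y y0] R_eq[OF x] by (intro sum.cong) (auto simp: field_simps)
  also have "\<dots> = C x y0 * T y y0"
    using t by (simp add: sum_distrib_left[symmetric] sum_divide_distrib[symmetric] col_norm)
  finally show "C x y * of_real t = C x y0 * T y y0" .
qed

lemma factorized_family_column_orth:
  fixes C :: "nat \<Rightarrow> nat \<Rightarrow> nat \<Rightarrow> complex" and T :: "nat \<Rightarrow> nat \<Rightarrow> complex"
  assumes column: "\<And>i x y. i \<in> S \<Longrightarrow> x < n \<Longrightarrow> y < l \<Longrightarrow> C i x y * of_real t = C i x y0 * T y y0"
    and orth: "\<And>i i'. i \<in> S \<Longrightarrow> i' \<in> S \<Longrightarrow>
        (\<Sum>x<n. \<Sum>y<l. cnj (C i x y) * C i' x y) = (if i = i' then 1 else 0)"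
    and col_norm: "(\<Sum>x<n. cnj (C i0 x y0) * C i0 x y0) = of_real t"
    and t: "t > 0" and i0: "i0 \<in> S" and i: "i \<in> S" "i' \<in> S"
  shows "(\<Sum>x<n. cnj (C i x y0) * C i' x y0) = (if i = i' then of_real t else 0)"
proof -
  define G where "G = (\<Sum>y<l. cnj (T y y0) * T y y0)"
  have orth_G: "(\<Sum>x<n. cnj (C i x y0) * C i' x y0) * G = (if i = i' then of_real t * of_real t else 0)"
    if "i \<in> S" "i' \<in> S" for i i'
  proof -
    have "(if i = i' then of_real t * of_real t else 0)
       = (\<Sum>x<n. \<Sum>y<l. cnj (C i x y) * C i' x y) * (of_real t * of_real t)"
      using orth[OF that] by simp
    also have "\<dots> = (\<Sum>x<n. \<Sum>y<l. cnj (C i x y * of_real t) * (C i' x y * of_real t))"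
      unfolding sum_distrib_right by (simp add: mult_ac)
    also have "\<dots> = (\<Sum>x<n. \<Sum>y<l. cnj (C i x y0 * T y y0) * (C i' x y0 * T y y0))"
      using column that by (intro sum.cong refl) auto
    also have "\<dots> = (\<Sum>x<n. cnj (C i x y0) * C i' x y0) * G"
      unfolding G_def by (simp add: sum_distrib_right sum_distrib_left mult_ac)
    finally show ?thesis by simp
  qed
  have "G = of_real t" using orth_G[OF i0 i0] col_norm t by simp
  then show ?thesis using orth_G[OF i] t by (auto split: if_splits)
qed

text \<open>T does not depend on i, so each C i is the product of its column y0 with one fixed row;
  the normalised columns y0 are the u i.\<close>
lemma product_coefficients_rank_one:
  fixes C R :: "nat \<Rightarrow> nat \<Rightarrow> nat \<Rightarrow> complex" and T :: "nat \<Rightarrow> nat \<Rightarrow> complex"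
  assumes factor: "\<And>i x x' y y'. i \<in> S \<Longrightarrow> x < n \<Longrightarrow> x' < n \<Longrightarrow> y < l \<Longrightarrow> y' < l \<Longrightarrow>
        C i x y * cnj (C i x' y') = R i x x' * T y y'"
    and T_eq: "\<And>i y y'. i \<in> S \<Longrightarrow> y < l \<Longrightarrow> y' < l \<Longrightarrow> T y y' = (\<Sum>x<n. C i x y * cnj (C i x y'))"
    and orth: "\<And>i i'. i \<in> S \<Longrightarrow> i' \<in> S \<Longrightarrow>
        (\<Sum>x<n. \<Sum>y<l. cnj (C i x y) * C i' x y) = (if i = i' then 1 else 0)"
    and i0: "i0 \<in> S"
  obtains u where "\<And>i x x'. i \<in> S \<Longrightarrow> x < n \<Longrightarrow> x' < n \<Longrightarrow> R i x x' = u i x * cnj (u i x')"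
    and "\<And>i i'. i \<in> S \<Longrightarrow> i' \<in> S \<Longrightarrow> (\<Sum>x<n. cnj (u i x) * u i' x) = (if i = i' then 1 else 0)"
proof -
  have "(\<Sum>y<l. T y y) = (\<Sum>x<n. \<Sum>y<l. cnj (C i0 x y) * C i0 x y)"
    using T_eq[OF i0] by (simp add: sum.swap[of _ "{..<l}"] mult.commute)
  then have "(\<Sum>y<l. T y y) = 1" using orth[OF i0 i0] by simp
  then obtain y0 where y0: "y0 < l" "T y0 y0 \<noteq> 0"
    by (metis (no_types, lifting) lessThan_iff sum.neutral zero_neq_one)
  define t where "t = (\<Sum>x<n. (cmod (C i0 x y0))\<^sup>2)"
  have col_norm: "(\<Sum>x<n. cnj (C i x y0) * C i x y0) = of_real t" if i: "i \<in> S" for i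
  proof -
    have "(\<Sum>x<n. cnj (C i x y0) * C i x y0) = T y0 y0"
      using T_eq[OF i y0(1) y0(1)] by (simp add: mult.commute)
    also have "\<dots> = (\<Sum>x<n. cnj (C i0 x y0) * C i0 x y0)"
      using T_eq[OF i0 y0(1) y0(1)] by (simp add: mult.commute)
    also have "\<dots> = of_real t" unfolding t_def of_real_sum complex_norm_square by (simp add: mult.commute)
    finally show ?thesis .
  qed
  have T_y0: "T y0 y0 = of_real t" using col_norm[OF i0] T_eq[OF i0 y0(1) y0(1)] by (simp add: mult.commute)
  then have "t \<noteq> 0" using y0(2) by simp
  moreover have "t \<ge> 0" unfolding t_def by (intro sum_nonneg) auto
  ultimately have t: "t > 0" by simp
  define u where "u i x = C i x y0 / of_real (sqrt t)" for i x
  have R_eq: "R i x x' = C i x y0 * cnj (C i x' y0) / of_real t" if "i \<in> S" "x < n" "x' < n" for i x x'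
    using factorized_matrix_rank_one(1)[of n l "C i" "R i" T,
        OF factor[OF that(1)] y0(1) T_y0 t col_norm[OF that(1)] that(2,3)] .
  have "C i x y * of_real t = C i x y0 * T y y0" if "i \<in> S" "x < n" "y < l" for i x y
    using factorized_matrix_rank_one(2)[of n l "C i" "R i" T,
        OF factor[OF that(1)] y0(1) T_y0 t col_norm[OF that(1)] that(2,3)] .
  from factorized_family_column_orth[where C=C and T=T, OF this orth col_norm[OF i0] t i0]
  have column_orth: "(\<Sum>x<n. cnj (C i x y0) * C i' x y0) = (if i = i' then of_real t else 0)"
    if "i \<in> S" "i' \<in> S" for i i'
    using that by blast
  have sqrt_sq: "of_real (sqrt t) * of_real (sqrt t) = (of_real t :: complex)"
    using t by (simp flip: of_real_mult)
  show thesis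
  proof
    show "R i x x' = u i x * cnj (u i x')" if "i \<in> S" "x < n" "x' < n" for i x x'
      unfolding R_eq[OF that] u_def using sqrt_sq by simp
    show "(\<Sum>x<n. cnj (u i x) * u i' x) = (if i = i' then 1 else 0)" if "i \<in> S" "i' \<in> S" for i i'
      using column_orth[OF that] sqrt_sq t
      by (simp add: u_def sum_divide_distrib[symmetric])
  qed
qed

lemma in_span_fam_basis_vector:
  assumes "finite S" "(i,j) \<in> S" "e i j \<in> carrier_vec d"
  shows "in_span_fam d e S (e i j)"
  unfolding in_span_fam_def
proof (intro conjI exI allI impI)
  fix r assume "r < d"
  have "(\<Sum>(a,b)\<in>S. (if a = i \<and> b = j then 1 else 0) * e a b $ r) = (\<Sum>x\<in>S. if x = (i,j) then e i j $ r else 0)"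
    by (intro sum.cong refl) (auto split: if_splits)
  then show "e i j $ r = (\<Sum>(a,b)\<in>S. (if a = i \<and> b = j then 1 else 0) * e a b $ r)"
    using assms by simp
qed (use assms in simp)

lemma index_prod_op:
  "r < d \<Longrightarrow> c < d \<Longrightarrow> prod_op d e m k A B $$ (r,c) =
    (\<Sum>a<m. \<Sum>a'<m. \<Sum>b<k. \<Sum>b'<k. A $$ (a,a') * B $$ (b,b') * (e a b $ r * cnj (e a' b' $ c)))"
  unfolding prod_op_def ketbra_def by simp

lemma prod_op_carrier: "prod_op d e m k A B \<in> carrier_mat d d"
  unfolding prod_op_def by simp

lemma prod_op_mult_vec_in_span:
  assumes v: "v \<in> carrier_vec d"
  shows "in_span_fam d e ({..<m} \<times> {..<k}) (prod_op d e m k A B *\<^sub>v v)"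
proof -
  define K where "K a b s = (\<Sum>a'<m. \<Sum>b'<k. A $$ (a,a') * B $$ (b,b') * cnj (e a' b' $ s))" for a b s
  define c where "c a b = (\<Sum>s<d. K a b s * v $ s)" for a b
  note P = prod_op_carrier[of d e m k A B]
  have P_entry: "prod_op d e m k A B $$ (r,s) = (\<Sum>a<m. \<Sum>b<k. e a b $ r * K a b s)"
    if "r < d" "s < d" for r s
  proof -
    have "prod_op d e m k A B $$ (r,s) = (\<Sum>a<m. \<Sum>b<k. \<Sum>a'<m. \<Sum>b'<k.
        e a b $ r * (A $$ (a,a') * B $$ (b,b') * cnj (e a' b' $ s)))"
      unfolding index_prod_op[OF that] by (rule sum.cong[OF refl], subst sum.swap) (simp add: mult_ac)
    then show ?thesis by (simp add: K_def sum_distrib_left)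
  qed
  have "(prod_op d e m k A B *\<^sub>v v) $ r = (\<Sum>a<m. \<Sum>b<k. c a b * e a b $ r)" if r: "r < d" for r
  proof -
    have "(prod_op d e m k A B *\<^sub>v v) $ r = (\<Sum>s<d. \<Sum>a<m. \<Sum>b<k. e a b $ r * K a b s * v $ s)"
      unfolding index_mult_mat_vec_sum[OF P v r] using r by (simp add: P_entry sum_distrib_right)
    also have "\<dots> = (\<Sum>a<m. \<Sum>b<k. \<Sum>s<d. e a b $ r * K a b s * v $ s)"
      by (simp only: sum.swap[of _ "{..<d}"])
    also have "\<dots> = (\<Sum>a<m. \<Sum>b<k. c a b * e a b $ r)"
      by (simp add: c_def sum_distrib_left sum_distrib_right mult_ac)
    finally show ?thesis .
  qed
  then show ?thesis
    unfolding in_span_fam_def using v P by (auto simp: sum.cartesian_product)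
qed

lemma index_prod_op_diag:
  assumes "r < d" "c < d"
  shows "prod_op d e m k (diag_of m pb) (diag_of k pt) $$ (r,c)
    = (\<Sum>i<m. \<Sum>j<k. of_real (pb i) * of_real (pt j) * (e i j $ r * cnj (e i j $ c)))"
proof -
  have "prod_op d e m k (diag_of m pb) (diag_of k pt) $$ (r,c) = (\<Sum>i<m. \<Sum>j<k. \<Sum>i'<m. \<Sum>j'<k.
      diag_of m pb $$ (i,i') * diag_of k pt $$ (j,j') * (e i j $ r * cnj (e i' j' $ c)))"
    unfolding index_prod_op[OF assms] by (rule sum.cong[OF refl], rule sum.swap)
  also have "\<dots> = (\<Sum>i<m. \<Sum>j<k. \<Sum>i'<m. \<Sum>j'<k.
      if i' = i \<and> j' = j then of_real (pb i) * of_real (pt j) * (e i j $ r * cnj (e i j $ c)) else 0)"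
    by (intro sum.cong refl) (auto simp: diag_of_def)
  finally show ?thesis by (simp add: sum_sum_delta)
qed

lemma index_conj_mixture:
  fixes w :: "nat \<Rightarrow> nat \<Rightarrow> complex" and f :: "nat \<Rightarrow> nat \<Rightarrow> complex vec"
  assumes U: "U \<in> carrier_mat d d" and P: "P \<in> carrier_mat d d"
    and f: "\<And>i j. i < m \<Longrightarrow> j < k \<Longrightarrow> f i j \<in> carrier_vec d"
    and P_entry: "\<And>s t. s < d \<Longrightarrow> t < d \<Longrightarrow>
      P $$ (s,t) = (\<Sum>i<m. \<Sum>j<k. w i j * (f i j $ s * cnj (f i j $ t)))"
    and r: "r < d" and c: "c < d"
  shows "(U * P * mat_adjoint U) $$ (r,c)
    = (\<Sum>i<m. \<Sum>j<k. w i j * ((U *\<^sub>v f i j) $ r * cnj ((U *\<^sub>v f i j) $ c)))"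
proof -
  have UP: "(U * P) $$ (r,t) = (\<Sum>i<m. \<Sum>j<k. w i j * ((U *\<^sub>v f i j) $ r * cnj (f i j $ t)))"
    if t: "t < d" for t
  proof -
    have "(U * P) $$ (r,t) = (\<Sum>s<d. \<Sum>i<m. \<Sum>j<k. w i j * (U $$ (r,s) * f i j $ s * cnj (f i j $ t)))"
      using t by (simp add: index_mult_mat_sum[OF U P r t] P_entry sum_distrib_left mult_ac)
    also have "\<dots> = (\<Sum>i<m. \<Sum>j<k. \<Sum>s<d. w i j * (U $$ (r,s) * f i j $ s * cnj (f i j $ t)))"
      by (simp only: sum.swap[of _ "{..<d}"])
    also have "\<dots> = (\<Sum>i<m. \<Sum>j<k. w i j * ((U *\<^sub>v f i j) $ r * cnj (f i j $ t)))"
      by (intro sum.cong refl) (use f in \<open>simp add: index_mult_mat_vec_sum[OF U _ r]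
          sum_distrib_left sum_distrib_right mult_ac del: index_mult_mat_vec\<close>)
    finally show ?thesis .
  qed
  have "(U * P * mat_adjoint U) $$ (r,c)
      = (\<Sum>t<d. \<Sum>i<m. \<Sum>j<k. w i j * ((U *\<^sub>v f i j) $ r * (cnj (f i j $ t) * cnj (U $$ (c,t)))))"
    using c by (simp add: index_mult_mat_sum[OF mult_carrier_mat[OF U P] mat_adjoint_carrier[OF U] r c]
        UP index_mat_adjoint[OF U] sum_distrib_left sum_distrib_right mult_ac)
  also have "\<dots> = (\<Sum>i<m. \<Sum>j<k. \<Sum>t<d. w i j * ((U *\<^sub>v f i j) $ r * (cnj (f i j $ t) * cnj (U $$ (c,t)))))"
    by (simp only: sum.swap[of _ "{..<d}"])
  also have "\<dots> = (\<Sum>i<m. \<Sum>j<k. w i j * ((U *\<^sub>v f i j) $ r * cnj ((U *\<^sub>v f i j) $ c)))"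
    by (intro sum.cong refl) (use f in \<open>simp add: index_mult_mat_vec_sum[OF U _ c]
        sum_distrib_left sum_distrib_right mult_ac del: index_mult_mat_vec\<close>)
  finally show ?thesis .
qed

lemma index_prod_op_mixture:
  fixes p q :: "nat \<Rightarrow> complex"
  assumes "r < d" "c < d"
  shows "prod_op d e m k (mat m m (\<lambda>(a,a'). \<Sum>i\<in>I. p i * A i a a'))
      (mat k k (\<lambda>(b,b'). \<Sum>j\<in>J. q j * B j b b')) $$ (r,c)
    = (\<Sum>i\<in>I. \<Sum>j\<in>J. p i * q j *
        prod_op d e m k (mat m m (\<lambda>(a,a'). A i a a')) (mat k k (\<lambda>(b,b'). B j b b')) $$ (r,c))"
proof -
  let ?F = "\<lambda>i j a a' b b'. p i * q j * (A i a a' * B j b b' * (e a b $ r * cnj (e a' b' $ c)))"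
  have "(\<Sum>i\<in>I. \<Sum>j\<in>J. p i * q j *
        prod_op d e m k (mat m m (\<lambda>(a,a'). A i a a')) (mat k k (\<lambda>(b,b'). B j b b')) $$ (r,c))
      = (\<Sum>i\<in>I. \<Sum>j\<in>J. \<Sum>a<m. \<Sum>a'<m. \<Sum>b<k. \<Sum>b'<k. ?F i j a a' b b')"
    unfolding index_prod_op[OF assms] by (simp add: sum_distrib_left)
  also have "\<dots> = (\<Sum>a<m. \<Sum>a'<m. \<Sum>b<k. \<Sum>b'<k. \<Sum>i\<in>I. \<Sum>j\<in>J. ?F i j a a' b b')"
    by (simp only: sum.swap[of _ I]) (simp only: sum.swap[of _ J])
  also have "\<dots> = prod_op d e m k (mat m m (\<lambda>(a,a'). \<Sum>i\<in>I. p i * A i a a'))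
      (mat k k (\<lambda>(b,b'). \<Sum>j\<in>J. q j * B j b b')) $$ (r,c)"
    unfolding index_prod_op[OF assms]
    by (intro sum.cong refl) (simp add: sum_distrib_left sum_distrib_right mult_ac, rule sum.swap)
  finally show ?thesis by simp
qed

section \<open>Edge marginals of states in V\<close>

text \<open>Matrix entries of the partial traces of |psi)(psi| over the top and the bottom labels.\<close>
definition rdm_bottom :: "nat \<Rightarrow> (nat \<Rightarrow> nat \<Rightarrow> complex vec) \<Rightarrow> complex vec \<Rightarrow> nat \<Rightarrow> nat \<Rightarrow> complex" where
  "rdm_bottom k e \<psi> a a' = (\<Sum>b<k. braket (e a b) \<psi> * cnj (braket (e a' b) \<psi>))"

abbreviation rdm_top :: "nat \<Rightarrow> (nat \<Rightarrow> nat \<Rightarrow> complex vec) \<Rightarrow> complex vec \<Rightarrow> nat \<Rightarrow> nat \<Rightarrow> complex" where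
  "rdm_top m e \<equiv> rdm_bottom m (\<lambda>j i. e i j)"

lemma rdm_bottom_hermitian: "cnj (rdm_bottom k e \<psi> a' a) = rdm_bottom k e \<psi> a a'"
  unfolding rdm_bottom_def by (simp add: mult.commute)

locale product_onb =
  fixes d m k :: nat and e :: "nat \<Rightarrow> nat \<Rightarrow> complex vec"
  assumes e_carrier: "\<And>i j. i < m \<Longrightarrow> j < k \<Longrightarrow> e i j \<in> carrier_vec d"
    and e_orthonormal: "\<And>i j i' j'. i < m \<Longrightarrow> j < k \<Longrightarrow> i' < m \<Longrightarrow> j' < k \<Longrightarrow>
      braket (e i j) (e i' j') = (if i = i' \<and> j = j' then 1 else 0)"
begin

text \<open>Exchanging the two edges; every statement about the top edge below is obtained from the
  bottom one for the swapped family.\<close>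
lemma product_onb_swap: "product_onb d k m (\<lambda>j i. e i j)"
  by unfold_locales (auto simp: e_carrier e_orthonormal)

definition in_V :: "complex vec \<Rightarrow> bool" where
  "in_V v \<longleftrightarrow> v \<in> carrier_vec d \<and> (\<forall>r<d. v $ r = (\<Sum>a<m. \<Sum>b<k. braket (e a b) v * e a b $ r))"

lemma in_V_swap: "product_onb.in_V d k m (\<lambda>j i. e i j) v \<longleftrightarrow> in_V v"
proof -
  interpret swapped: product_onb d k m "\<lambda>j i. e i j" by (rule product_onb_swap)
  show ?thesis unfolding swapped.in_V_def in_V_def by (simp add: sum.swap[of _ "{..<k}"])
qed

lemma braket_basis_right: "v \<in> carrier_vec d \<Longrightarrow> a < m \<Longrightarrow> b < k \<Longrightarrow> braket v (e a b) = cnj (braket (e a b) v)"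
  using braket_conj_sym e_carrier by blast

lemma in_V_carrier: "in_V v \<Longrightarrow> v \<in> carrier_vec d"
  unfolding in_V_def by simp

lemma in_span_imp_in_V:
  assumes "in_span_fam d e ({..<m} \<times> {..<k}) v"
  shows "in_V v"
proof -
  from assms obtain c where v: "v \<in> carrier_vec d"
    and c: "\<And>r. r < d \<Longrightarrow> v $ r = (\<Sum>i<m. \<Sum>j<k. c i j * e i j $ r)"
    unfolding in_span_fam_def by (auto simp: sum.cartesian_product)
  have "braket (e a b) v = c a b" if ab: "a < m" "b < k" for a b
  proof -
    have "braket (e a b) v = (\<Sum>i<m. \<Sum>j<k. c i j * braket (e a b) (e i j))"
      using e_carrier ab
      by (simp add: braket_eq_sum[of _ d] c sum_distrib_left sum_distrib_right mult.assoc
          sum.swap[of _ "{..<d}"])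
    also have "\<dots> = (\<Sum>i<m. \<Sum>j<k. if i = a \<and> j = b then c i j else 0)"
      by (intro sum.cong refl) (use ab in \<open>auto simp: e_orthonormal\<close>)
    also have "\<dots> = c a b" using ab by (rule sum_sum_delta)
    finally show ?thesis .
  qed
  then show ?thesis unfolding in_V_def using v c by simp
qed

lemma braket_in_V:
  assumes v: "v \<in> carrier_vec d" and w: "in_V w"
  shows "braket v w = (\<Sum>a<m. \<Sum>b<k. braket (e a b) w * cnj (braket (e a b) v))"
proof -
  have "braket v w = (\<Sum>a<m. \<Sum>b<k. braket (e a b) w * (\<Sum>r<d. e a b $ r * cnj (v $ r)))"
    using v w unfolding in_V_def
    by (simp add: braket_eq_sum[of _ d] sum_distrib_left sum_distrib_right mult.assoc sum.swap[of _ "{..<d}"])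
  also have "\<dots> = (\<Sum>a<m. \<Sum>b<k. braket (e a b) w * cnj (braket (e a b) v))"
    by (intro sum.cong refl)
      (use v e_carrier in \<open>simp add: braket_eq_sum[of _ d, symmetric] braket_conj_sym[of v d]\<close>)
  finally show ?thesis .
qed

lemma braket_mult_in_V:
  assumes Q: "Q \<in> carrier_mat d d" and \<psi>: "in_V \<psi>"
  shows "braket \<psi> (Q *\<^sub>v \<psi>) = (\<Sum>a<m. \<Sum>b<k. braket (e a b) \<psi> * braket \<psi> (Q *\<^sub>v e a b))"
proof -
  have \<psi>c: "\<psi> \<in> carrier_vec d" using in_V_carrier[OF \<psi>] .
  have "(Q *\<^sub>v \<psi>) $ r = (\<Sum>a<m. \<Sum>b<k. braket (e a b) \<psi> * (Q *\<^sub>v e a b) $ r)" if r: "r < d" for r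
  proof -
    have "(Q *\<^sub>v \<psi>) $ r = (\<Sum>s<d. Q $$ (r,s) * (\<Sum>a<m. \<Sum>b<k. braket (e a b) \<psi> * e a b $ s))"
      using \<psi> unfolding in_V_def by (simp add: index_mult_mat_vec_sum[OF Q \<psi>c r] del: index_mult_mat_vec)
    also have "\<dots> = (\<Sum>a<m. \<Sum>b<k. braket (e a b) \<psi> * (\<Sum>s<d. Q $$ (r,s) * e a b $ s))"
      by (simp add: sum_distrib_left mult_ac sum.swap[of _ "{..<d}"])
    also have "\<dots> = (\<Sum>a<m. \<Sum>b<k. braket (e a b) \<psi> * (Q *\<^sub>v e a b) $ r)"
      by (intro sum.cong refl)
        (use e_carrier in \<open>simp add: index_mult_mat_vec_sum[OF Q _ r] del: index_mult_mat_vec\<close>)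
    finally show ?thesis .
  qed
  then show ?thesis
    using \<psi>c by (simp add: braket_eq_sum[of _ d] sum_distrib_left sum_distrib_right mult.assoc
        sum.swap[of _ "{..<d}"] del: index_mult_mat_vec)
qed

lemma braket_bottom_unit:
  assumes Q: "Q \<in> carrier_mat d d"
    and Q_e: "\<And>a b. a < m \<Longrightarrow> b < k \<Longrightarrow> Q *\<^sub>v e a b = (if a = i then e i' b else 0\<^sub>v d)"
    and i: "i < m" and i': "i' < m" and \<psi>: "in_V \<psi>"
  shows "braket \<psi> (Q *\<^sub>v \<psi>) = rdm_bottom k e \<psi> i i'"
proof -
  have \<psi>c: "\<psi> \<in> carrier_vec d" using in_V_carrier[OF \<psi>] .
  have "braket \<psi> (Q *\<^sub>v \<psi>)
      = (\<Sum>a<m. if a = i then \<Sum>b<k. braket (e i b) \<psi> * cnj (braket (e i' b) \<psi>) else 0)"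
    unfolding braket_mult_in_V[OF Q \<psi>] by (intro sum.cong refl)
      (use i' e_carrier in \<open>auto simp: Q_e braket_zero_right[OF \<psi>c] braket_basis_right[OF \<psi>c]\<close>)
  then show ?thesis using i by (simp add: rdm_bottom_def)
qed

lemma braket_top_unit:
  assumes Q: "Q \<in> carrier_mat d d"
    and Q_e: "\<And>a b. a < m \<Longrightarrow> b < k \<Longrightarrow> Q *\<^sub>v e a b = (if b = j then e a j' else 0\<^sub>v d)"
    and j: "j < k" and j': "j' < k" and \<psi>: "in_V \<psi>"
  shows "braket \<psi> (Q *\<^sub>v \<psi>) = rdm_top m e \<psi> j j'"
proof -
  interpret swapped: product_onb d k m "\<lambda>j i. e i j" by (rule product_onb_swap)
  show ?thesis using swapped.braket_bottom_unit[OF Q _ j j'] Q_e \<psi> by (simp add: in_V_swap)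
qed

lemma braket_matrix_unit:
  assumes Q: "Q \<in> carrier_mat d d"
    and Q_e: "\<And>a b. a < m \<Longrightarrow> b < k \<Longrightarrow> Q *\<^sub>v e a b = (if a = i \<and> b = j then e i' j' else 0\<^sub>v d)"
    and i: "i < m" and j: "j < k" and i': "i' < m" and j': "j' < k" and \<psi>: "in_V \<psi>"
  shows "braket \<psi> (Q *\<^sub>v \<psi>) = braket (e i j) \<psi> * cnj (braket (e i' j') \<psi>)"
proof -
  have \<psi>c: "\<psi> \<in> carrier_vec d" using in_V_carrier[OF \<psi>] .
  have "braket \<psi> (Q *\<^sub>v \<psi>)
      = (\<Sum>a<m. \<Sum>b<k. if a = i \<and> b = j then braket (e i j) \<psi> * cnj (braket (e i' j') \<psi>) else 0)"
    unfolding braket_mult_in_V[OF Q \<psi>] by (intro sum.cong refl)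
      (use i' j' e_carrier in \<open>auto simp: Q_e braket_zero_right[OF \<psi>c] braket_basis_right[OF \<psi>c]\<close>)
  then show ?thesis using sum_sum_delta[OF i j] by simp
qed

end

section \<open>Flux insertion preserves product states\<close>

locale flux_insertion = product_onb +
  fixes Ab At :: "complex mat set" and U :: "complex mat"
  assumes Ab_alg: "op_algebra d Ab" and At_alg: "op_algebra d At"
    and Ab_At_commute: "\<And>X Y. X \<in> Ab \<Longrightarrow> Y \<in> At \<Longrightarrow> X * Y = Y * X"
    and U_unitary: "unitary_mat d U"
    and U_conj_Ab: "\<And>X. X \<in> Ab \<Longrightarrow> mat_adjoint U * X * U \<in> Ab \<and> U * X * mat_adjoint U \<in> Ab"
    and U_conj_At: "\<And>X. X \<in> At \<Longrightarrow> mat_adjoint U * X * U \<in> At \<and> U * X * mat_adjoint U \<in> At"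
    and bottom_units: "\<And>i i'. i < m \<Longrightarrow> i' < m \<Longrightarrow>
      \<exists>Q\<in>Ab. \<forall>a<m. \<forall>b<k. Q *\<^sub>v e a b = (if a = i then e i' b else 0\<^sub>v d)"
    and top_units: "\<And>j j'. j < k \<Longrightarrow> j' < k \<Longrightarrow>
      \<exists>Q\<in>At. \<forall>a<m. \<forall>b<k. Q *\<^sub>v e a b = (if b = j then e a j' else 0\<^sub>v d)"
    and basis_expectation_product: "\<And>i j X Y. i < m \<Longrightarrow> j < k \<Longrightarrow> X \<in> Ab \<Longrightarrow> Y \<in> At \<Longrightarrow>
      braket (e i j) (X * Y *\<^sub>v e i j) = braket (e i j) (X *\<^sub>v e i j) * braket (e i j) (Y *\<^sub>v e i j)"
begin

lemma flux_insertion_swap: "flux_insertion d k m (\<lambda>j i. e i j) At Ab U"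
proof -
  interpret swapped: product_onb d k m "\<lambda>j i. e i j" by (rule product_onb_swap)
  show ?thesis
  proof (unfold_locales)
    show "\<exists>Q\<in>At. \<forall>a<k. \<forall>b<m. Q *\<^sub>v e b a = (if a = j then e b j' else 0\<^sub>v d)"
      if "j < k" "j' < k" for j j' using top_units[OF that] by blast
    show "\<exists>Q\<in>Ab. \<forall>a<k. \<forall>b<m. Q *\<^sub>v e b a = (if b = i then e i' a else 0\<^sub>v d)"
      if "i < m" "i' < m" for i i' using bottom_units[OF that] by blast
    show "braket (e i j) (Y * X *\<^sub>v e i j) = braket (e i j) (Y *\<^sub>v e i j) * braket (e i j) (X *\<^sub>v e i j)"
      if "j < k" "i < m" "Y \<in> At" "X \<in> Ab" for i j X Y
      using basis_expectation_product[OF that(2,1,4,3)] Ab_At_commute[OF that(4,3)] by simp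
  qed (use Ab_alg At_alg Ab_At_commute U_unitary U_conj_Ab U_conj_At in auto)
qed

lemma U_carrier: "U \<in> carrier_mat d d"
  and U_adjoint_U: "mat_adjoint U * U = 1\<^sub>m d"
  and U_U_adjoint: "U * mat_adjoint U = 1\<^sub>m d"
  using U_unitary unfolding unitary_mat_def by auto

lemma Ab_carrier: "X \<in> Ab \<Longrightarrow> X \<in> carrier_mat d d"
  using Ab_alg unfolding op_algebra_def by auto

lemma At_carrier: "X \<in> At \<Longrightarrow> X \<in> carrier_mat d d"
  and At_mult: "X \<in> At \<Longrightarrow> Y \<in> At \<Longrightarrow> X * Y \<in> At"
  and At_adjoint: "X \<in> At \<Longrightarrow> mat_adjoint X \<in> At"
  using At_alg unfolding op_algebra_def by auto

lemma braket_unitary: "x \<in> carrier_vec d \<Longrightarrow> y \<in> carrier_vec d \<Longrightarrow> braket (U *\<^sub>v x) (U *\<^sub>v y) = braket x y"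
  using U_carrier U_adjoint_U
  by (simp add: braket_mult_mat_vec_left assoc_mult_mat_vec[of _ d d _ d, symmetric])

lemma braket_unitary_basis:
  "i < m \<Longrightarrow> j < k \<Longrightarrow> i' < m \<Longrightarrow> j' < k \<Longrightarrow>
    braket (U *\<^sub>v e i j) (U *\<^sub>v e i' j') = (if i = i' \<and> j = j' then 1 else 0)"
  by (simp add: braket_unitary e_carrier e_orthonormal)

text \<open>Conjugation by U preserves both algebras, so (A2) passes from the basis states to the
  evolved states.\<close>
lemma state_expectation_product:
  assumes ij: "i < m" "j < k" and X: "X \<in> Ab" and Y: "Y \<in> At"
  shows "braket (U *\<^sub>v e i j) (X * Y *\<^sub>v (U *\<^sub>v e i j)) =
    braket (U *\<^sub>v e i j) (X *\<^sub>v (U *\<^sub>v e i j)) * braket (U *\<^sub>v e i j) (Y *\<^sub>v (U *\<^sub>v e i j))"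
proof -
  have e: "e i j \<in> carrier_vec d" using e_carrier[OF ij] .
  have Xc: "X \<in> carrier_mat d d" and Yc: "Y \<in> carrier_mat d d" using Ab_carrier[OF X] At_carrier[OF Y] .
  have "mat_adjoint U * (X * Y) * U = (mat_adjoint U * X * U) * (mat_adjoint U * Y * U)"
  proof -
    have "(mat_adjoint U * X * U) * (mat_adjoint U * Y * U) = mat_adjoint U * X * (U * mat_adjoint U) * Y * U"
      using Xc Yc U_carrier by (simp add: assoc_mult_mat[of _ d d _ d _ d])
    then show ?thesis using Xc Yc U_carrier U_U_adjoint by (simp add: assoc_mult_mat[of _ d d _ d _ d])
  qed
  then show ?thesis
    using basis_expectation_product[OF ij, of "mat_adjoint U * X * U" "mat_adjoint U * Y * U"]
      U_conj_Ab[OF X] U_conj_At[OF Y]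
    by (simp add: braket_conj_mat[OF U_carrier _ e] Xc Yc)
qed

lemma coefficient_product:
  assumes ij: "i < m" "j < k" and \<psi>: "in_V (U *\<^sub>v e i j)"
    and a: "a < m" "a' < m" and b: "b < k" "b' < k"
  shows "braket (e a b) (U *\<^sub>v e i j) * cnj (braket (e a' b') (U *\<^sub>v e i j))
     = rdm_bottom k e (U *\<^sub>v e i j) a a' * rdm_top m e (U *\<^sub>v e i j) b b'"
proof -
  let ?\<psi> = "U *\<^sub>v e i j"
  obtain X where X: "X \<in> Ab" "\<And>x y. x < m \<Longrightarrow> y < k \<Longrightarrow> X *\<^sub>v e x y = (if x = a then e a' y else 0\<^sub>v d)"
    using bottom_units[OF a] by blast
  obtain Y where Y: "Y \<in> At" "\<And>x y. x < m \<Longrightarrow> y < k \<Longrightarrow> Y *\<^sub>v e x y = (if y = b then e x b' else 0\<^sub>v d)"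
    using top_units[OF b] by blast
  have Xc: "X \<in> carrier_mat d d" and Yc: "Y \<in> carrier_mat d d" using Ab_carrier[OF X(1)] At_carrier[OF Y(1)] .
  have XY: "X * Y *\<^sub>v e x y = (if x = a \<and> y = b then e a' b' else 0\<^sub>v d)" if "x < m" "y < k" for x y
    using that e_carrier a b Xc by (auto simp: assoc_mult_mat_vec[OF Xc Yc] X(2) Y(2))
  have "braket (e a b) ?\<psi> * cnj (braket (e a' b') ?\<psi>) = braket ?\<psi> (X * Y *\<^sub>v ?\<psi>)"
    using braket_matrix_unit[OF _ XY a(1) b(1) a(2) b(2) \<psi>] Xc Yc by simp
  also have "\<dots> = braket ?\<psi> (X *\<^sub>v ?\<psi>) * braket ?\<psi> (Y *\<^sub>v ?\<psi>)"
    by (rule state_expectation_product[OF ij X(1) Y(1)])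
  also have "\<dots> = rdm_bottom k e ?\<psi> a a' * rdm_top m e ?\<psi> b b'"
    using braket_bottom_unit[OF Xc X(2) a \<psi>] braket_top_unit[OF Yc Y(2) b \<psi>] by simp
  finally show ?thesis .
qed

text \<open>The top-edge operator Y = U Q U^* moving U e i j to U e i j' commutes with every bottom
  observable X, and Y^* Y acts as the identity in the product expectation.\<close>
lemma rdm_bottom_indep:
  assumes i: "i < m" and j: "j < k" "j' < k"
    and \<psi>: "in_V (U *\<^sub>v e i j)" and \<psi>': "in_V (U *\<^sub>v e i j')"
    and a: "a < m" "a' < m"
  shows "rdm_bottom k e (U *\<^sub>v e i j') a a' = rdm_bottom k e (U *\<^sub>v e i j) a a'"
proof -
  let ?\<psi> = "U *\<^sub>v e i j" and ?\<psi>' = "U *\<^sub>v e i j'"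
  have \<psi>c: "?\<psi> \<in> carrier_vec d" using in_V_carrier[OF \<psi>] .
  obtain Q where Q: "Q \<in> At" "\<forall>x<m. \<forall>y<k. Q *\<^sub>v e x y = (if y = j then e x j' else 0\<^sub>v d)"
    using top_units[OF j] by blast
  obtain X where X: "X \<in> Ab" "\<And>x y. x < m \<Longrightarrow> y < k \<Longrightarrow> X *\<^sub>v e x y = (if x = a then e a' y else 0\<^sub>v d)"
    using bottom_units[OF a] by blast
  define Y where "Y = U * Q * mat_adjoint U"
  have Y: "Y \<in> At" unfolding Y_def using U_conj_At[OF Q(1)] by simp
  have Xc: "X \<in> carrier_mat d d" and Yc: "Y \<in> carrier_mat d d" and Qc: "Q \<in> carrier_mat d d"
    using Ab_carrier[OF X(1)] At_carrier[OF Y] At_carrier[OF Q(1)] .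
  have "Y *\<^sub>v ?\<psi> = U *\<^sub>v (Q *\<^sub>v ((mat_adjoint U * U) *\<^sub>v e i j))"
    unfolding Y_def using U_carrier Qc e_carrier[OF i j(1)] by (simp add: assoc_mult_mat_vec[of _ d d _ d])
  then have Y\<psi>: "Y *\<^sub>v ?\<psi> = ?\<psi>'"
    using U_adjoint_U e_carrier[OF i j(1)] Q(2) i j by simp
  have YY: "mat_adjoint Y * Y \<in> At" using At_mult[OF At_adjoint[OF Y] Y] .
  have "mat_adjoint Y * X * Y = X * (mat_adjoint Y * Y)"
    using Xc Yc Ab_At_commute[OF X(1) Y] Ab_At_commute[OF X(1) YY]
    by (simp add: assoc_mult_mat[of _ d d _ d _ d])
  then have "braket ?\<psi>' (X *\<^sub>v ?\<psi>') = braket ?\<psi> (X * (mat_adjoint Y * Y) *\<^sub>v ?\<psi>)"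
    using braket_conj_mat[OF Yc Xc \<psi>c] Y\<psi> by simp
  also have "\<dots> = braket ?\<psi> (X *\<^sub>v ?\<psi>) * braket ?\<psi> (mat_adjoint Y * Y *\<^sub>v ?\<psi>)"
    by (rule state_expectation_product[OF i j(1) X(1) YY])
  also have "braket ?\<psi> (mat_adjoint Y * Y *\<^sub>v ?\<psi>) = braket ?\<psi>' ?\<psi>'"
    using braket_mult_mat_vec_left[OF Yc \<psi>c, of ?\<psi>'] Y\<psi> Yc \<psi>c U_carrier e_carrier[OF i j(2)]
    by (simp add: assoc_mult_mat_vec[of _ d d _ d])
  also have "braket ?\<psi>' ?\<psi>' = 1" using braket_unitary_basis i j by simp
  finally show ?thesis
    using braket_bottom_unit[OF Xc X(2) a \<psi>] braket_bottom_unit[OF Xc X(2) a \<psi>'] by simp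
qed

lemma rdm_top_indep:
  assumes i: "i < m" "i' < m" and j: "j < k"
    and \<psi>: "in_V (U *\<^sub>v e i j)" and \<psi>': "in_V (U *\<^sub>v e i' j)"
    and b: "b < k" "b' < k"
  shows "rdm_top m e (U *\<^sub>v e i' j) b b' = rdm_top m e (U *\<^sub>v e i j) b b'"
proof -
  interpret swapped: flux_insertion d k m "\<lambda>j i. e i j" At Ab U by (rule flux_insertion_swap)
  show ?thesis using swapped.rdm_bottom_indep[OF j i] \<psi> \<psi>' b by (simp add: in_V_swap)
qed

end

definition sigma_bottom ::
  "nat \<Rightarrow> nat \<Rightarrow> (nat \<Rightarrow> nat \<Rightarrow> complex vec) \<Rightarrow> complex mat \<Rightarrow> (nat \<Rightarrow> real) \<Rightarrow> nat \<Rightarrow> complex mat" where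
  "sigma_bottom m k e U p j0 = mat m m (\<lambda>(a,a'). \<Sum>i<m. of_real (p i) * rdm_bottom k e (U *\<^sub>v e i j0) a a')"

abbreviation sigma_top ::
  "nat \<Rightarrow> nat \<Rightarrow> (nat \<Rightarrow> nat \<Rightarrow> complex vec) \<Rightarrow> complex mat \<Rightarrow> (nat \<Rightarrow> real) \<Rightarrow> nat \<Rightarrow> complex mat" where
  "sigma_top m k e U p i0 \<equiv> sigma_bottom k m (\<lambda>j i. e i j) U p i0"

lemma sigma_bottom_carrier: "sigma_bottom m k e U p j0 \<in> carrier_mat m m"
  unfolding sigma_bottom_def by simp

lemma hermitian_sigma_bottom: "hermitian_mat (sigma_bottom m k e U p j0)"
  unfolding hermitian_mat_def
proof (rule eq_matI)
  fix a a' assume "a < dim_row (sigma_bottom m k e U p j0)" "a' < dim_col (sigma_bottom m k e U p j0)"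
  then have "a < m" "a' < m" by (auto simp: sigma_bottom_def)
  then show "mat_adjoint (sigma_bottom m k e U p j0) $$ (a,a') = sigma_bottom m k e U p j0 $$ (a,a')"
    by (simp add: index_mat_adjoint[OF sigma_bottom_carrier]) (simp add: sigma_bottom_def rdm_bottom_hermitian)
qed (auto simp: sigma_bottom_def)

text \<open>Ib and Jt stand for the low-energy label sets I_delta and J_delta, and i0, j0 for Omega.\<close>
locale flux_mixture = flux_insertion +
  fixes Ib Jt :: "nat set" and pb pt :: "nat \<Rightarrow> real" and i0 j0 :: nat
  assumes Ib_bound: "Ib \<subseteq> {..<m}" and Jt_bound: "Jt \<subseteq> {..<k}"
    and low_energy_in_V: "\<And>i j. i \<in> Ib \<Longrightarrow> j \<in> Jt \<Longrightarrow> in_V (U *\<^sub>v e i j)"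
    and pb_support: "\<And>i. i < m \<Longrightarrow> pb i \<noteq> 0 \<Longrightarrow> i \<in> Ib"
    and pt_support: "\<And>j. j < k \<Longrightarrow> pt j \<noteq> 0 \<Longrightarrow> j \<in> Jt"
    and i0: "i0 \<in> Ib" and j0: "j0 \<in> Jt"
begin

lemma flux_mixture_swap: "flux_mixture d k m (\<lambda>j i. e i j) At Ab U Jt Ib pt pb j0 i0"
proof -
  interpret swapped: flux_insertion d k m "\<lambda>j i. e i j" At Ab U by (rule flux_insertion_swap)
  show ?thesis
    by unfold_locales
      (use Ib_bound Jt_bound low_energy_in_V pb_support pt_support i0 j0 in \<open>auto simp: in_V_swap\<close>)
qed

lemma evolved_state_product:
  assumes i: "i \<in> Ib" and j: "j \<in> Jt"
  shows "ketbra d (U *\<^sub>v e i j) (U *\<^sub>v e i j) = prod_op d e m k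
      (mat m m (\<lambda>(a,a'). rdm_bottom k e (U *\<^sub>v e i j0) a a'))
      (mat k k (\<lambda>(b,b'). rdm_top m e (U *\<^sub>v e i0 j) b b'))" (is "ketbra d ?\<psi> ?\<psi> = ?P")
proof (rule eq_matI)
  have ij: "i < m" "j < k" and i0j0: "i0 < m" "j0 < k"
    using i j i0 j0 Ib_bound Jt_bound by auto
  have \<psi>: "in_V ?\<psi>" using low_energy_in_V[OF i j] .
  fix r c assume "r < dim_row ?P" "c < dim_col ?P"
  then have rc: "r < d" "c < d" by (auto simp: prod_op_def)
  have "?\<psi> $ r * cnj (?\<psi> $ c) = (\<Sum>a<m. \<Sum>b<k. braket (e a b) ?\<psi> * e a b $ r)
      * cnj (\<Sum>a'<m. \<Sum>b'<k. braket (e a' b') ?\<psi> * e a' b' $ c)"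
    using \<psi> rc unfolding in_V_def by simp
  also have "\<dots> = (\<Sum>a<m. \<Sum>b<k. \<Sum>a'<m. \<Sum>b'<k.
      braket (e a b) ?\<psi> * cnj (braket (e a' b') ?\<psi>) * (e a b $ r * cnj (e a' b' $ c)))"
    by (simp only: cnj_sum sum_distrib_right, simp only: sum_distrib_left, simp add: mult_ac)
  also have "\<dots> = (\<Sum>a<m. \<Sum>a'<m. \<Sum>b<k. \<Sum>b'<k.
      braket (e a b) ?\<psi> * cnj (braket (e a' b') ?\<psi>) * (e a b $ r * cnj (e a' b' $ c)))"
    by (rule sum.cong[OF refl], rule sum.swap)
  also have "\<dots> = (\<Sum>a<m. \<Sum>a'<m. \<Sum>b<k. \<Sum>b'<k. rdm_bottom k e (U *\<^sub>v e i j0) a a'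
      * rdm_top m e (U *\<^sub>v e i0 j) b b' * (e a b $ r * cnj (e a' b' $ c)))"
  proof (intro sum.cong refl)
    fix a a' b b' assume "a \<in> {..<m}" "a' \<in> {..<m}" "b \<in> {..<k}" "b' \<in> {..<k}"
    then have a: "a < m" "a' < m" and b: "b < k" "b' < k" by auto
    show "braket (e a b) ?\<psi> * cnj (braket (e a' b') ?\<psi>) * (e a b $ r * cnj (e a' b' $ c))
      = rdm_bottom k e (U *\<^sub>v e i j0) a a' * rdm_top m e (U *\<^sub>v e i0 j) b b'
        * (e a b $ r * cnj (e a' b' $ c))"
      using coefficient_product[OF ij \<psi> a b]
        rdm_bottom_indep[OF ij(1) i0j0(2) ij(2) low_energy_in_V[OF i j0] \<psi> a]
        rdm_top_indep[OF i0j0(1) ij low_energy_in_V[OF i0 j] \<psi> b]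
      by simp
  qed
  finally show "ketbra d ?\<psi> ?\<psi> $$ (r,c) = ?P $$ (r,c)"
    using rc by (simp add: index_prod_op ketbra_def)
qed (simp_all add: ketbra_def prod_op_def)

lemma evolved_mixture_eq_prod_op:
  "U * prod_op d e m k (diag_of m pb) (diag_of k pt) * mat_adjoint U
    = prod_op d e m k (sigma_bottom m k e U pb j0) (sigma_top m k e U pt i0)" (is "?L = ?R")
proof (rule eq_matI)
  let ?\<psi> = "\<lambda>i j. U *\<^sub>v e i j"
  let ?Q = "\<lambda>i j. prod_op d e m k (mat m m (\<lambda>(a,a'). rdm_bottom k e (?\<psi> i j0) a a'))
    (mat k k (\<lambda>(b,b'). rdm_top m e (?\<psi> i0 j) b b'))"
  fix r c assume "r < dim_row ?R" "c < dim_col ?R"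
  then have rc: "r < d" "c < d" by (simp_all add: prod_op_def)
  have "?L $$ (r,c) = (\<Sum>i<m. \<Sum>j<k. of_real (pb i) * of_real (pt j) * (?\<psi> i j $ r * cnj (?\<psi> i j $ c)))"
    by (rule index_conj_mixture[OF U_carrier _ _ _ rc])
      (auto simp: prod_op_carrier index_prod_op_diag e_carrier)
  also have "\<dots> = (\<Sum>i<m. \<Sum>j<k. of_real (pb i) * of_real (pt j) * ?Q i j $$ (r,c))"
  proof (intro sum.cong refl)
    fix i j assume ij: "i \<in> {..<m}" "j \<in> {..<k}"
    show "of_real (pb i) * of_real (pt j) * (?\<psi> i j $ r * cnj (?\<psi> i j $ c))
      = of_real (pb i) * of_real (pt j) * ?Q i j $$ (r,c)"
    proof (cases "pb i = 0 \<or> pt j = 0")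
      case False
      then have "i \<in> Ib" "j \<in> Jt" using ij pb_support pt_support by auto
      from arg_cong[OF evolved_state_product[OF this], of "\<lambda>M. M $$ (r,c)"] show ?thesis
        using rc by (simp add: ketbra_def)
    qed auto
  qed
  also have "\<dots> = ?R $$ (r,c)"
    unfolding sigma_bottom_def by (rule index_prod_op_mixture[OF rc, symmetric])
  finally show "?L $$ (r,c) = ?R $$ (r,c)" .
qed (use U_carrier in \<open>simp_all add: prod_op_def\<close>)

lemma char_poly_sigma_bottom: "char_poly (sigma_bottom m k e U pb j0) = char_poly (diag_of m pb)"
proof -
  define C where "C i x y = braket (e x y) (U *\<^sub>v e i j0)" for i x y
  have Ib_m: "i < m" if "i \<in> Ib" for i using Ib_bound that by auto
  have j0_k: "j0 < k" using Jt_bound j0 by auto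
  have \<psi>: "in_V (U *\<^sub>v e i j0)" if "i \<in> Ib" for i using low_energy_in_V[OF that j0] .
  have rdm_top_eq: "rdm_top m e (U *\<^sub>v e i j0) y y' = rdm_top m e (U *\<^sub>v e i0 j0) y y'"
    if "i \<in> Ib" "y < k" "y' < k" for i y y'
    using rdm_top_indep[OF Ib_m[OF i0] Ib_m[OF that(1)] j0_k \<psi>[OF i0] \<psi>[OF that(1)] that(2,3)] .
  have factor: "C i x y * cnj (C i x' y') = rdm_bottom k e (U *\<^sub>v e i j0) x x' * rdm_top m e (U *\<^sub>v e i0 j0) y y'"
    if "i \<in> Ib" "x < m" "x' < m" "y < k" "y' < k" for i x x' y y'
    using coefficient_product[OF Ib_m[OF that(1)] j0_k \<psi>[OF that(1)] that(2-5)] rdm_top_eq[OF that(1,4,5)]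
    by (simp add: C_def)
  have partial_trace: "rdm_top m e (U *\<^sub>v e i0 j0) y y' = (\<Sum>x<m. C i x y * cnj (C i x y'))"
    if "i \<in> Ib" "y < k" "y' < k" for i y y'
    using rdm_top_eq[OF that] by (simp add: rdm_bottom_def C_def)
  have orth: "(\<Sum>x<m. \<Sum>y<k. cnj (C i x y) * C i' x y) = (if i = i' then 1 else 0)"
    if "i \<in> Ib" "i' \<in> Ib" for i i'
  proof -
    have "(\<Sum>x<m. \<Sum>y<k. cnj (C i x y) * C i' x y) = braket (U *\<^sub>v e i j0) (U *\<^sub>v e i' j0)"
      using braket_in_V[OF in_V_carrier[OF \<psi>[OF that(1)]] \<psi>[OF that(2)]] by (simp add: C_def mult.commute)
    then show ?thesis using braket_unitary_basis Ib_m that j0_k by simp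
  qed
  obtain u where rdm_u: "\<And>i x x'. i \<in> Ib \<Longrightarrow> x < m \<Longrightarrow> x' < m \<Longrightarrow>
        rdm_bottom k e (U *\<^sub>v e i j0) x x' = u i x * cnj (u i x')"
    and orth_u: "\<And>i i'. i \<in> Ib \<Longrightarrow> i' \<in> Ib \<Longrightarrow> (\<Sum>x<m. cnj (u i x) * u i' x) = (if i = i' then 1 else 0)"
    using product_coefficients_rank_one[OF factor partial_trace orth i0] by blast
  have "sigma_bottom m k e U pb j0 = mat m m (\<lambda>(a,a'). \<Sum>i<m. of_real (pb i) * (u i a * cnj (u i a')))"
    unfolding sigma_bottom_def
    by (rule eq_matI) (auto intro!: sum.cong simp: rdm_u dest: pb_support)
  then show ?thesis using char_poly_orthonormal_mixture[OF pb_support orth_u] by simp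
qed

lemma char_poly_sigma_top: "char_poly (sigma_top m k e U pt i0) = char_poly (diag_of k pt)"
proof -
  interpret swapped: flux_mixture d k m "\<lambda>j i. e i j" At Ab U Jt Ib pt pb j0 i0
    by (rule flux_mixture_swap)
  show ?thesis by (rule swapped.char_poly_sigma_bottom)
qed

end

theorem mainTheorem4:
  fixes d m k :: nat
    and e :: "nat \<Rightarrow> nat \<Rightarrow> complex vec"
    and \<epsilon>b \<epsilon>t :: "nat \<Rightarrow> real"
    and \<Omega>b \<Omega>t :: nat
    and Ab At :: "complex mat set"
    and U :: "complex mat"
    and \<delta> :: real
    and pb pt :: "nat \<Rightarrow> real"
  assumes e_carrier: "\<forall>i<m. \<forall>j<k. e i j \<in> carrier_vec d"
    and e_orthonormal: "\<forall>i<m. \<forall>j<k. \<forall>i'<m. \<forall>j'<k.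
          braket (e i j) (e i' j') = (if i = i' \<and> j = j' then 1 else 0)"
    and \<Omega>_mem: "\<Omega>b < m" "\<Omega>t < k"
    and \<Omega>_zero: "\<epsilon>b \<Omega>b = 0" "\<epsilon>t \<Omega>t = 0"
    and \<epsilon>_nonneg: "\<forall>i<m. 0 \<le> \<epsilon>b i" "\<forall>j<k. 0 \<le> \<epsilon>t j"
    and Ab_alg: "op_algebra d Ab"
    and At_alg: "op_algebra d At"
    and commute: "\<forall>X\<in>Ab. \<forall>Y\<in>At. X * Y = Y * X"
    and U_unitary: "unitary_mat d U"
    and U_loc_b: "\<forall>X\<in>Ab. mat_adjoint U * X * U \<in> Ab \<and> U * X * mat_adjoint U \<in> Ab"
    and U_loc_t: "\<forall>X\<in>At. mat_adjoint U * X * U \<in> At \<and> U * X * mat_adjoint U \<in> At"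
    and A1_b: "\<forall>i<m. \<forall>i'<m. \<exists>Q\<in>Ab. \<forall>i''<m. \<forall>j<k.
          Q *\<^sub>v e i'' j = (if i'' = i then e i' j else 0\<^sub>v d)"
    and A1_t: "\<forall>j<k. \<forall>j'<k. \<exists>Q\<in>At. \<forall>i<m. \<forall>j''<k.
          Q *\<^sub>v e i j'' = (if j'' = j then e i j' else 0\<^sub>v d)"
    and A2: "\<forall>i<m. \<forall>j<k. \<forall>Ob\<in>Ab. \<forall>Ot\<in>At.
          braket (e i j) (Ob * Ot *\<^sub>v e i j)
            = braket (e i j) (Ob *\<^sub>v e i j) * braket (e i j) (Ot *\<^sub>v e i j)"
    and \<delta>_pos: "\<delta> > 0"
    and A3: "\<forall>v. in_span_fam d e {(i,j). i < m \<and> j < k \<and> \<epsilon>b i \<le> \<delta> \<and> \<epsilon>t j \<le> \<delta>} v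
          \<longrightarrow> in_span_fam d e ({..<m} \<times> {..<k}) (U *\<^sub>v v)"
    and pb_prob: "\<forall>i<m. 0 \<le> pb i" "(\<Sum>i<m. pb i) = 1"
    and pt_prob: "\<forall>j<k. 0 \<le> pt j" "(\<Sum>j<k. pt j) = 1"
    and pb_supp: "\<forall>i<m. \<delta> < \<epsilon>b i \<longrightarrow> pb i = 0"
    and pt_supp: "\<forall>j<k. \<delta> < \<epsilon>t j \<longrightarrow> pt j = 0"
  shows "(\<forall>v\<in>carrier_vec d.
            in_span_fam d e ({..<m} \<times> {..<k})
              ((U * prod_op d e m k (diag_of m pb) (diag_of k pt) * mat_adjoint U) *\<^sub>v v))
       \<and> (\<exists>\<sigma>b \<sigma>t. \<sigma>b \<in> carrier_mat m m \<and> \<sigma>t \<in> carrier_mat k k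
            \<and> hermitian_mat \<sigma>b \<and> hermitian_mat \<sigma>t
            \<and> U * prod_op d e m k (diag_of m pb) (diag_of k pt) * mat_adjoint U
                = prod_op d e m k \<sigma>b \<sigma>t
            \<and> spec_mset \<sigma>b = spec_mset (diag_of m pb)
            \<and> spec_mset \<sigma>t = spec_mset (diag_of k pt))"
proof -
  interpret product_onb d m k e
    using e_carrier e_orthonormal by unfold_locales auto
  let ?Ib = "{i. i < m \<and> \<epsilon>b i \<le> \<delta>}" and ?Jt = "{j. j < k \<and> \<epsilon>t j \<le> \<delta>}"
  have "in_V (U *\<^sub>v e i j)" if "i \<in> ?Ib" "j \<in> ?Jt" for i j
  proof (rule in_span_imp_in_V, rule A3[rule_format], rule in_span_fam_basis_vector)
    show "finite {(i,j). i < m \<and> j < k \<and> \<epsilon>b i \<le> \<delta> \<and> \<epsilon>t j \<le> \<delta>}"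
      by (rule finite_subset[of _ "{..<m} \<times> {..<k}"]) auto
  qed (use that e_carrier in auto)
  then interpret flux_mixture d m k e Ab At U ?Ib ?Jt pb pt \<Omega>b \<Omega>t
    by unfold_locales
      (use Ab_alg At_alg commute U_unitary U_loc_b U_loc_t A1_b A1_t A2 pb_supp pt_supp
        \<Omega>_mem \<Omega>_zero \<delta>_pos in \<open>auto simp: not_less\<close>)
  show ?thesis
  proof (intro conjI ballI)
    fix v :: "complex vec" assume "v \<in> carrier_vec d"
    then show "in_span_fam d e ({..<m} \<times> {..<k})
        ((U * prod_op d e m k (diag_of m pb) (diag_of k pt) * mat_adjoint U) *\<^sub>v v)"
      unfolding evolved_mixture_eq_prod_op by (rule prod_op_mult_vec_in_span)
  next
    show "\<exists>\<sigma>b \<sigma>t. \<sigma>b \<in> carrier_mat m m \<and> \<sigma>t \<in> carrier_mat k k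
        \<and> hermitian_mat \<sigma>b \<and> hermitian_mat \<sigma>t
        \<and> U * prod_op d e m k (diag_of m pb) (diag_of k pt) * mat_adjoint U = prod_op d e m k \<sigma>b \<sigma>t
        \<and> spec_mset \<sigma>b = spec_mset (diag_of m pb) \<and> spec_mset \<sigma>t = spec_mset (diag_of k pt)"
      unfolding spec_mset_def
      using evolved_mixture_eq_prod_op sigma_bottom_carrier hermitian_sigma_bottom
        char_poly_sigma_bottom char_poly_sigma_top by metis
  qed
qed

end
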